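(* Let $d\ge 2$ and $k$ be integers with $0\le k\le d-1$. Then there is an integer $n=n(d,k)$ and a set of $n$ $k$-flats in $\mathbb{R}^d$ in general position which is not in convex position.
   Context: A $k$-flat is an affine subspace of $\mathbb{R}^d$ of dimension $k$. A set $\{U_1,\ldots,U_n\}$ of $k$-flats in $\mathbb{R}^d$ ($0\le k\le d-1$) is in convex position if there is a $d$-dimensional convex polytope $P\subset\mathbb{R}^d$ such that $U_i\cap P$ is a $k$-dimensional face of $P$ for every $i\in[n]$. General position: if $0\le k\le d-2$, the $k$-flats $U_1,\ldots,U_n$ are in general position if there is a $(d-k)$-flat $A$ such that $U_i\cap A$ is a single point for every $i$, no three of these $n$ points are collinear, and their affine hull equals $A$. If $k=d-1$, $n\ge d$ hyperplanes are in general position if every $d$ of them intersect in a single point and these $\binom nd$ points are pairwise distinct. *)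

theory Defs
  imports "HOL-Analysis.Analysis"
begin

definition k_flat :: "nat \<Rightarrow> 'a::euclidean_space set \<Rightarrow> bool" where
  "k_flat k U \<longleftrightarrow> affine U \<and> U \<noteq> {} \<and> aff_dim U = int k"

definition convex_position :: "nat \<Rightarrow> nat \<Rightarrow> (nat \<Rightarrow> 'a::euclidean_space set) \<Rightarrow> bool" where
  "convex_position k n U \<longleftrightarrow>
     (\<exists>P::'a set. polytope P \<and> aff_dim P = int DIM('a) \<and>
        (\<forall>i<n. (U i \<inter> P) face_of P \<and> aff_dim (U i \<inter> P) = int k))"

definition general_position :: "nat \<Rightarrow> nat \<Rightarrow> (nat \<Rightarrow> 'a::euclidean_space set) \<Rightarrow> bool" where
  "general_position k n U \<longleftrightarrow>
     (if k + 2 \<le> DIM('a) then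
        (\<exists>A p. k_flat (DIM('a) - k) A \<and>
           (\<forall>i<n. U i \<inter> A = {p i}) \<and>
           inj_on p {..<n} \<and>
           (\<forall>i<n. \<forall>j<n. \<forall>l<n. i \<noteq> j \<and> i \<noteq> l \<and> j \<noteq> l \<longrightarrow> \<not> collinear {p i, p j, p l}) \<and>
           affine hull (p ` {..<n}) = A)
      else
        n \<ge> DIM('a) \<and>
        (\<exists>q. (\<forall>I. I \<subseteq> {..<n} \<and> card I = DIM('a) \<longrightarrow> (\<Inter>i\<in>I. U i) = {q I}) \<and>
             inj_on q {I. I \<subseteq> {..<n} \<and> card I = DIM('a)}))"

end

theory Submission
  imports Defs
begin

(*
  For k <= d - 2 the flats are translates p i + L of one k-dimensional subspace L, with the
  points p i in a complementary subspace A: the origin, a basis e_0, ..., e_(m-1) of A and the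
  centroid of 0, e_0, e_1. Two linear functionals map them to points (t, t^2) of a parabola and
  to (1, 5/3), which shows that no three are collinear. If the translates met a polytope P in
  faces, the centroid of points of P on the translates through 0, e_0, e_1 would lie on the
  translate through the centroid, hence inside that face, and the face would then also contain
  the point on the translate through 0, which is disjoint from it.

  For k = d - 1 the flats are hyperplanes w i \<bullet> x = c i: one through the origin with a basis
  vector as normal, and, for each direction u = e_b or u = -e_b, a cluster of d hyperplanes
  w \<bullet> x = 1 with w close to u, plus one whose normal is a nonnegative combination of theirs of
  total weight > 1. A polytope touching every cluster hyperplane in a face cannot lie beyond
  all hyperplanes of a cluster, as it would then miss the combined one; this confines it to
  the cube [-4/3, 4/3]^d. The hyperplane through the origin then leaves the polytope on one
  side, and the cluster around the direction of that side cannot reach it. General position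
  is achieved by choosing every new normal outside a finite union of null sets.
*)

lemma mem_translation_iff:
  fixes a x :: "'a::ab_group_add"
  shows "x \<in> (+) a ` S \<longleftrightarrow> x - a \<in> S"
  by (metis add_diff_cancel_left' diff_add_cancel image_iff add.commute)

lemma k_flat_translation_subspace:
  assumes "subspace L"
  shows "k_flat (dim L) ((+) a ` L)"
  using assms subspace_0[OF assms]
  by (auto simp: k_flat_def affine_translation[symmetric] subspace_imp_affine
      aff_dim_translation_eq aff_dim_subspace)

lemma translation_subspace_Int:
  assumes "subspace A" "subspace L" "A \<inter> L \<subseteq> {0}" "a \<in> A"
  shows "(+) a ` L \<inter> A = {a}"
proof -
  have "x = a" if "x - a \<in> L" "x \<in> A" for x
    using that assms subspace_diff[of A x a] by auto
  moreover have "a \<in> (+) a ` L" using assms(2) subspace_0[of L] by (simp add: mem_translation_iff)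
  ultimately show ?thesis
    using assms(4) mem_translation_iff by blast
qed

lemma span_Int_span_Basis_diff:
  assumes "B \<subseteq> Basis"
  shows "span B \<inter> span (Basis - B) \<subseteq> {0 :: 'a::euclidean_space}"
proof
  fix x :: 'a assume x: "x \<in> span B \<inter> span (Basis - B)"
  have "x \<bullet> b = 0" if "b \<in> Basis" for b
  proof -
    have "orthogonal b x" if "x \<in> span S" "b \<in> Basis - S" "S \<subseteq> Basis" for S
      using that(1) by (rule orthogonal_to_span) (use that in \<open>auto simp: orthogonal_def inner_Basis\<close>)
    then show ?thesis
      using x assms \<open>b \<in> Basis\<close> by (cases "b \<in> B") (auto simp: orthogonal_def inner_commute)
  qed
  then show "x \<in> {0}" using euclidean_all_zero_iff by blast
qed

lemma k_flat_hyperplane: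
  fixes a :: "'a::euclidean_space"
  assumes "a \<noteq> 0"
  shows "k_flat (DIM('a) - 1) {x. a \<bullet> x = b}"
proof -
  have "\<exists>x. a \<bullet> x = b"
    using assms by (intro exI[of _ "(b / (a \<bullet> a)) *\<^sub>R a"]) simp
  then show ?thesis
    using assms unfolding k_flat_def by (auto simp: affine_hyperplane aff_dim_hyperplane)
qed

lemma convex_position_nonempty_faces:
  assumes "convex_position k n U"
  obtains P where "polytope P" "\<And>i. i < n \<Longrightarrow> (U i \<inter> P) face_of P \<and> U i \<inter> P \<noteq> {}"
proof -
  obtain P where "polytope P" and faces: "\<forall>i<n. (U i \<inter> P) face_of P \<and> aff_dim (U i \<inter> P) = int k"
    using assms unfolding convex_position_def by blast
  moreover have "U i \<inter> P \<noteq> {}" if "i < n" for i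
    using faces that by fastforce
  ultimately show ?thesis using that by blast
qed

lemma face_of_hyperplane_one_side:
  fixes a :: "'a::euclidean_space"
  assumes "convex P" and "({x. a \<bullet> x = b} \<inter> P) face_of P"
  shows "(\<forall>x\<in>P. a \<bullet> x \<le> b) \<or> (\<forall>x\<in>P. b \<le> a \<bullet> x)"
proof (rule ccontr)
  assume "\<not> ?thesis"
  then obtain p q where p: "p \<in> P" "b < a \<bullet> p" and q: "q \<in> P" "a \<bullet> q < b"
    by (auto simp: not_le)
  define t where "t = (b - a \<bullet> q) / (a \<bullet> p - a \<bullet> q)"
  have t: "0 < t" "t < 1" using p q by (auto simp: t_def field_simps)
  define c where "c = (1 - t) *\<^sub>R q + t *\<^sub>R p"
  have "c \<in> P" using assms(1) p q t unfolding c_def by (auto intro: convexD)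
  moreover have "a \<bullet> c = b"
    using p q by (simp add: c_def t_def inner_add_right algebra_simps) (simp add: field_simps)
  moreover have "c \<in> open_segment q p" using t p q by (auto simp: in_segment c_def)
  ultimately have "p \<in> {x. a \<bullet> x = b}"
    using assms(2) p q unfolding face_of_def by blast
  then show False using p by simp
qed

lemma face_of_translates_segment:
  fixes L :: "'a::euclidean_space set"
  assumes L: "subspace L" and "convex P" and face: "((+) c ` L \<inter> P) face_of P"
    and x: "x \<in> (+) a ` L" "x \<in> P" and y: "y \<in> (+) b ` L" "y \<in> P"
    and c: "c = (1 - t) *\<^sub>R a + t *\<^sub>R b" and t: "0 < t" "t < 1"
  shows "a - c \<in> L"
proof -
  define z where "z = (1 - t) *\<^sub>R x + t *\<^sub>R y"
  have "z \<in> P" unfolding z_def using \<open>convex P\<close> x(2) y(2) t by (simp add: convexD)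
  have "z - c = (1 - t) *\<^sub>R (x - a) + t *\<^sub>R (y - b)"
    by (simp add: z_def c algebra_simps)
  also have "\<dots> \<in> L"
    using L x(1) y(1) by (simp add: mem_translation_iff subspace_add subspace_mul)
  finally have "z \<in> (+) c ` L" by (simp add: mem_translation_iff)
  have "x \<in> (+) c ` L"
  proof (cases "x = y")
    case True
    then show ?thesis using \<open>z \<in> (+) c ` L\<close> by (simp add: z_def scaleR_add_left[symmetric])
  next
    case False
    then have "z \<in> open_segment x y" using t by (auto simp: in_segment z_def)
    then show ?thesis
      using face x(2) y(2) \<open>z \<in> P\<close> \<open>z \<in> (+) c ` L\<close> unfolding face_of_def by blast
  qed
  then have "(x - c) - (x - a) \<in> L"
    using subspace_diff[OF L, of "x - c" "x - a"] x(1) by (simp add: mem_translation_iff)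
  then show ?thesis by simp
qed

lemma collinear_inner_cross:
  fixes a b c f g :: "'a::euclidean_space"
  assumes "collinear {a, b, c}"
  shows "(f \<bullet> (b - a)) * (g \<bullet> (c - a)) = (g \<bullet> (b - a)) * (f \<bullet> (c - a))"
proof -
  obtain u where u: "\<forall>x\<in>{a, b, c}. \<forall>y\<in>{a, b, c}. \<exists>t. x - y = t *\<^sub>R u"
    using assms unfolding collinear_def by blast
  then obtain s t where "b - a = s *\<^sub>R u" "c - a = t *\<^sub>R u" by blast
  then show ?thesis by simp
qed

section \<open>Translates of a subspace\<close>

lemma parabola_cross_nonzero:
  fixes r s t :: nat
  assumes "r \<noteq> s" "r \<noteq> t" "s \<noteq> t"
  shows "(real s - real r) * ((real t)\<^sup>2 - (real r)\<^sup>2) \<noteq> ((real s)\<^sup>2 - (real r)\<^sup>2) * (real t - real r)"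
proof -
  have "(real s - real r) * ((real t)\<^sup>2 - (real r)\<^sup>2) - ((real s)\<^sup>2 - (real r)\<^sup>2) * (real t - real r)
      = (real s - real r) * (real t - real r) * (real t - real s)"
    by (simp add: algebra_simps power2_eq_square)
  then show ?thesis using assms by auto
qed

lemma parabola_centroid_cross_nonzero:
  fixes s t :: nat
  assumes "s \<noteq> t"
  shows "(real s - 1) * ((real t)\<^sup>2 - 5/3) \<noteq> ((real s)\<^sup>2 - 5/3) * (real t - 1)"
proof -
  have "(real s - 1) * ((real t)\<^sup>2 - 5/3) - ((real s)\<^sup>2 - 5/3) * (real t - 1)
      = (real t - real s) * (real (s * t) - real (s + t) + 5/3)"
    by (simp add: field_simps power2_eq_square)
  moreover have "real (s * t) - real (s + t) + 5/3 \<noteq> 0"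
  proof
    assume "real (s * t) - real (s + t) + 5/3 = 0"
    then have "real (3 * (s * t) + 5) = real (3 * (s + t))" by simp
    then have "(3 * (s * t) + 5) mod 3 = (3 * (s + t)) mod 3" by (simp only: of_nat_eq_iff)
    then show False by simp
  qed
  ultimately show ?thesis using assms by auto
qed

lemma moment_points_not_collinear:
  fixes p :: "nat \<Rightarrow> 'a::euclidean_space"
  assumes curve: "\<And>i. i \<le> m \<Longrightarrow> f \<bullet> p i = real i \<and> g \<bullet> p i = (real i)\<^sup>2"
    and extra: "f \<bullet> p (Suc m) = 1" "g \<bullet> p (Suc m) = 5/3"
    and "i \<le> Suc m" "j \<le> Suc m" "l \<le> Suc m" "i \<noteq> j" "i \<noteq> l" "j \<noteq> l"
  shows "\<not> collinear {p i, p j, p l}"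
proof
  define D where "D x y z = (f \<bullet> (y - x)) * (g \<bullet> (z - x)) - (g \<bullet> (y - x)) * (f \<bullet> (z - x))" for x y z
  have rotate: "D x y z = D y z x" and swap: "D x y z = - D y x z" for x y z
    by (simp_all add: D_def inner_diff_right algebra_simps)
  have nonzero: "D (p a) (p b) (p c) \<noteq> 0"
    if "a \<le> Suc m" "b \<le> m" "c \<le> m" "a \<noteq> b" "a \<noteq> c" "b \<noteq> c" for a b c
  proof (cases "a = Suc m")
    case True
    then show ?thesis
      unfolding D_def inner_diff_right True extra
      using parabola_centroid_cross_nonzero[OF \<open>b \<noteq> c\<close>] curve that by simp
  next
    case False
    then show ?thesis
      using parabola_cross_nonzero[of a b c] curve that by (simp add: D_def inner_diff_right)
  qed
  assume "collinear {p i, p j, p l}"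
  then have "D (p i) (p j) (p l) = 0" unfolding D_def by (simp add: collinear_inner_cross)
  moreover have "D (p i) (p j) (p l) \<noteq> 0"
  proof -
    consider "j \<le> m" "l \<le> m" | "j = Suc m" | "l = Suc m" using assms by linarith
    then show ?thesis
    proof cases
      case 1
      then show ?thesis using nonzero assms by blast
    next
      case 2
      then show ?thesis using nonzero[of j i l] swap[of "p i"] assms by auto
    next
      case 3
      then show ?thesis using nonzero[of l i j] rotate[of "p i"] rotate[of "p j"] assms by auto
    qed
  qed
  ultimately show False by contradiction
qed

lemma translates_general_position:
  fixes A L :: "'a::euclidean_space set" and p :: "nat \<Rightarrow> 'a"
  assumes "k + 2 \<le> DIM('a)" "subspace A" "subspace L" "A \<inter> L \<subseteq> {0}" "dim A = DIM('a) - k"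
    and "\<And>i. i < n \<Longrightarrow> p i \<in> A" "inj_on p {..<n}"
    and "\<And>i j l. \<lbrakk>i < n; j < n; l < n; i \<noteq> j; i \<noteq> l; j \<noteq> l\<rbrakk> \<Longrightarrow> \<not> collinear {p i, p j, p l}"
    and "affine hull (p ` {..<n}) = A"
  shows "general_position k n (\<lambda>i. (+) (p i) ` L)"
proof -
  have "k_flat (DIM('a) - k) A"
    using k_flat_translation_subspace[OF assms(2), of 0] assms(5) by simp
  moreover have "\<forall>i<n. (+) (p i) ` L \<inter> A = {p i}"
    using translation_subspace_Int[OF assms(2-4)] assms(6) by blast
  ultimately show ?thesis
    unfolding general_position_def using assms(1,7-9) by (intro if_P[THEN iffD2] exI[of _ A] exI[of _ p]) auto
qed

lemma translates_centroid_not_convex_position: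
  fixes L :: "'a::euclidean_space set"
  assumes L: "subspace L" and idx: "c < n" "i < n" "j < n" "l < n"
    and centroid: "p c = (1/3) *\<^sub>R p i + (1/3) *\<^sub>R p j + (1/3) *\<^sub>R p l"
    and "p c - p i \<notin> L"
  shows "\<not> convex_position k n (\<lambda>i. (+) (p i) ` L)"
proof
  assume "convex_position k n (\<lambda>i. (+) (p i) ` L)"
  then obtain P where P: "polytope P"
    and faces: "\<And>i. i < n \<Longrightarrow> ((+) (p i) ` L \<inter> P) face_of P \<and> (+) (p i) ` L \<inter> P \<noteq> {}"
    by (rule convex_position_nonempty_faces) blast
  have touch: "\<exists>x. x \<in> (+) (p q) ` L \<and> x \<in> P" if "q < n" for q
    using faces[OF that] by blast
  obtain xi xj xl where "xi \<in> (+) (p i) ` L" "xi \<in> P" "xj \<in> (+) (p j) ` L" "xj \<in> P"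
      "xl \<in> (+) (p l) ` L" "xl \<in> P"
    using touch[OF idx(2)] touch[OF idx(3)] touch[OF idx(4)] by blast
  moreover have "midpoint xj xl - midpoint (p j) (p l) = (1/2) *\<^sub>R (xj - p j) + (1/2) *\<^sub>R (xl - p l)"
    by (simp add: midpoint_def algebra_simps)
  ultimately have "midpoint xj xl \<in> (+) (midpoint (p j) (p l)) ` L"
    using L by (simp add: mem_translation_iff subspace_add subspace_mul)
  have "midpoint xj xl \<in> P"
    using convexD[OF polytope_imp_convex[OF P] \<open>xj \<in> P\<close> \<open>xl \<in> P\<close>, of "1/2" "1/2"]
    by (simp add: midpoint_def scaleR_right_distrib)
  have "p i - p c \<in> L"
  proof (rule face_of_translates_segment[OF L polytope_imp_convex[OF P] conjunct1[OF faces[OF idx(1)]]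
        \<open>xi \<in> (+) (p i) ` L\<close> \<open>xi \<in> P\<close> \<open>midpoint xj xl \<in> (+) (midpoint (p j) (p l)) ` L\<close>
        \<open>midpoint xj xl \<in> P\<close>])
    show "p c = (1 - 2/3) *\<^sub>R p i + (2/3) *\<^sub>R midpoint (p j) (p l)"
      using centroid by (simp add: midpoint_def algebra_simps)
  qed auto
  then show False using \<open>p c - p i \<notin> L\<close> subspace_neg[OF L] by fastforce
qed

definition simplex_centroid_points :: "nat \<Rightarrow> (nat \<Rightarrow> 'a) \<Rightarrow> nat \<Rightarrow> 'a::real_vector" where
  "simplex_centroid_points m e i =
     (if i = 0 then 0 else if i \<le> m then e (i - 1) else (1/3) *\<^sub>R (e 0 + e 1))"

lemma inner_sum_Basis_enum:
  fixes e :: "nat \<Rightarrow> 'a::euclidean_space"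
  assumes "inj_on e {..<m}" "e ` {..<m} \<subseteq> Basis" "s < m"
  shows "(\<Sum>r<m. h r *\<^sub>R e r) \<bullet> e s = h s"
proof -
  have "e r \<bullet> e s = (if r = s then 1 else 0)" if "r < m" for r
    using assms that by (auto simp: inj_on_def inner_Basis image_subset_iff)
  then have "(\<Sum>r<m. h r *\<^sub>R e r) \<bullet> e s = (\<Sum>r<m. if r = s then h s else 0)"
    unfolding inner_sum_left by (intro sum.cong) auto
  then show ?thesis using assms(3) by simp
qed

lemma simplex_centroid_points_not_collinear:
  fixes e :: "nat \<Rightarrow> 'a::euclidean_space"
  assumes e: "inj_on e {..<m}" "e ` {..<m} \<subseteq> Basis" and "2 \<le> m"
    and "i \<le> Suc m" "j \<le> Suc m" "l \<le> Suc m" "i \<noteq> j" "i \<noteq> l" "j \<noteq> l"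
  shows "\<not> collinear {simplex_centroid_points m e i, simplex_centroid_points m e j,
            simplex_centroid_points m e l}"
proof -
  define f where "f = (\<Sum>r<m. real (Suc r) *\<^sub>R e r)"
  define g where "g = (\<Sum>r<m. (real (Suc r))\<^sup>2 *\<^sub>R e r)"
  have fg: "f \<bullet> e s = real (Suc s)" "g \<bullet> e s = (real (Suc s))\<^sup>2" if "s < m" for s
    unfolding f_def g_def
    using inner_sum_Basis_enum[OF e that, of "\<lambda>r. real (Suc r)"]
      inner_sum_Basis_enum[OF e that, of "\<lambda>r. (real (Suc r))\<^sup>2"] by simp_all
  show ?thesis
  proof (rule moment_points_not_collinear)
    show "f \<bullet> simplex_centroid_points m e i = real i \<and> g \<bullet> simplex_centroid_points m e i = (real i)\<^sup>2"
      if "i \<le> m" for i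
      using that fg[of "i - 1"] by (auto simp: simplex_centroid_points_def)
    show "f \<bullet> simplex_centroid_points m e (Suc m) = 1" "g \<bullet> simplex_centroid_points m e (Suc m) = 5/3"
      using fg[of 0] fg[of 1] \<open>2 \<le> m\<close> by (simp_all add: simplex_centroid_points_def inner_add_right)
  qed (use assms in auto)
qed

lemma simplex_centroid_points_inj:
  fixes e :: "nat \<Rightarrow> 'a::euclidean_space"
  assumes "inj_on e {..<m}" "e ` {..<m} \<subseteq> Basis" "2 \<le> m"
  shows "inj_on (simplex_centroid_points m e) {..<m + 2}"
proof (rule inj_onI, rule ccontr)
  fix i j assume "i \<in> {..<m + 2}" "j \<in> {..<m + 2}" "i \<noteq> j"
    and "simplex_centroid_points m e i = simplex_centroid_points m e j"
  moreover define l :: nat where "l = (if 0 \<notin> {i, j} then 0 else if 1 \<notin> {i, j} then 1 else 2)"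
  moreover have "l \<noteq> i" "l \<noteq> j" "l \<le> Suc m" using \<open>2 \<le> m\<close> by (auto simp: l_def)
  ultimately show False
    using simplex_centroid_points_not_collinear[OF assms, of i j l] collinear_2 by (auto simp: insert_commute)
qed

lemma simplex_centroid_points_span:
  assumes "2 \<le> m"
  shows "simplex_centroid_points m e i \<in> span (e ` {..<m})"
    and "affine hull (simplex_centroid_points m e ` {..<m + 2}) = span (e ` {..<m})"
proof -
  let ?p = "simplex_centroid_points m e"
  have "e r \<in> span (e ` {..<m})" if "r < m" for r
    using that by (intro span_base) auto
  then show p_span: "?p i \<in> span (e ` {..<m})" for i
    using assms by (auto simp: simplex_centroid_points_def span_zero span_add span_mul)
  have "0 \<in> ?p ` {..<m + 2}" using image_eqI[of 0 ?p 0] by (simp add: simplex_centroid_points_def)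
  then have "affine hull (?p ` {..<m + 2}) = span (?p ` {..<m + 2})" by (meson affine_hull_span_0 hull_inc)
  moreover have "span (?p ` {..<m + 2}) \<subseteq> span (e ` {..<m})"
    using p_span by (intro span_minimal) auto
  moreover have "e ` {..<m} \<subseteq> ?p ` {..<m + 2}"
  proof
    fix b assume "b \<in> e ` {..<m}"
    then obtain r where "r < m" "b = e r" by blast
    then have "b = ?p (Suc r)" "Suc r \<in> {..<m + 2}" by (simp_all add: simplex_centroid_points_def)
    then show "b \<in> ?p ` {..<m + 2}" by blast
  qed
  then have "span (e ` {..<m}) \<subseteq> span (?p ` {..<m + 2})" by (rule span_mono)
  ultimately show "affine hull (?p ` {..<m + 2}) = span (e ` {..<m})" by blast
qed

lemma obtain_Basis_enum_complement:
  assumes "m \<le> DIM('a::euclidean_space)"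
  obtains e :: "nat \<Rightarrow> 'a::euclidean_space" where "inj_on e {..<m}" "e ` {..<m} \<subseteq> Basis"
    "span (e ` {..<m}) \<inter> span (Basis - e ` {..<m}) \<subseteq> {0}"
    "dim (span (e ` {..<m})) = m" "dim (span (Basis - e ` {..<m})) = DIM('a) - m"
proof -
  obtain B where B: "B \<subseteq> (Basis :: 'a set)" "card B = m"
    using assms by (meson obtain_subset_with_card_n)
  then obtain e where "bij_betw e {..<m} B"
    using ex_bij_betw_nat_finite[of B] finite_subset[OF B(1)] by (auto simp: atLeast0LessThan)
  then have e: "inj_on e {..<m}" "e ` {..<m} = B" by (auto simp: bij_betw_def)
  have "dim (span B) = m" "dim (span (Basis - B)) = DIM('a) - m"
    using B dim_eq_card_independent[OF independent_mono[OF independent_Basis], of B]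
      dim_eq_card_independent[OF independent_mono[OF independent_Basis], of "Basis - B"]
    by (auto simp: card_Diff_subset finite_subset)
  with e B(1) span_Int_span_Basis_diff[OF B(1)] show ?thesis
    by (intro that[OF e(1)]) simp_all
qed

lemma translates_not_in_convex_position:
  assumes "k + 2 \<le> DIM('a::euclidean_space)"
  shows "\<exists>n (U :: nat \<Rightarrow> 'a set). (\<forall>i<n. k_flat k (U i)) \<and> inj_on U {..<n} \<and>
           general_position k n U \<and> \<not> convex_position k n U"
proof -
  define m where "m = DIM('a) - k"
  have "2 \<le> m" "m \<le> DIM('a)" using assms by (simp_all add: m_def)
  obtain e :: "nat \<Rightarrow> 'a" where e: "inj_on e {..<m}" "e ` {..<m} \<subseteq> Basis"
    and compl: "span (e ` {..<m}) \<inter> span (Basis - e ` {..<m}) \<subseteq> {0}"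
    and dims: "dim (span (e ` {..<m})) = m" "dim (span (Basis - e ` {..<m})) = DIM('a) - m"
    using \<open>m \<le> DIM('a)\<close> by (rule obtain_Basis_enum_complement)
  define A where "A = span (e ` {..<m})"
  define L where "L = span (Basis - e ` {..<m})"
  define p where "p = simplex_centroid_points m e"
  define U where "U = (\<lambda>i. (+) (p i) ` L)"
  have "subspace A" "subspace L" by (simp_all add: A_def L_def)
  have AL: "A \<inter> L \<subseteq> {0}" and "dim A = DIM('a) - k" "dim L = k"
    using compl dims assms by (simp_all add: A_def L_def m_def)
  have pA: "p i \<in> A" for i
    using simplex_centroid_points_span(1)[OF \<open>2 \<le> m\<close>] by (simp add: A_def p_def)
  have "general_position k (m + 2) U"
    unfolding U_def using assms \<open>subspace A\<close> \<open>subspace L\<close> AL \<open>dim A = DIM('a) - k\<close> pA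
  proof (rule translates_general_position)
    show "inj_on p {..<m + 2}" unfolding p_def using e \<open>2 \<le> m\<close> by (rule simplex_centroid_points_inj)
    show "\<not> collinear {p i, p j, p l}" if "i < m + 2" "j < m + 2" "l < m + 2" "i \<noteq> j" "i \<noteq> l" "j \<noteq> l"
      for i j l
      unfolding p_def using simplex_centroid_points_not_collinear[OF e \<open>2 \<le> m\<close>] that by simp
    show "affine hull (p ` {..<m + 2}) = A"
      using simplex_centroid_points_span(2)[OF \<open>2 \<le> m\<close>] by (simp add: A_def p_def)
  qed
  moreover have "inj_on U {..<m + 2}"
    using translation_subspace_Int[OF \<open>subspace A\<close> \<open>subspace L\<close> AL pA]
      simplex_centroid_points_inj[OF e \<open>2 \<le> m\<close>]
    by (simp add: U_def p_def inj_on_def) (metis singleton_inject)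
  moreover have "k_flat k (U i)" for i
    using k_flat_translation_subspace[OF \<open>subspace L\<close>] \<open>dim L = k\<close> by (simp add: U_def)
  moreover have "\<not> convex_position k (m + 2) U"
    unfolding U_def
  proof (rule translates_centroid_not_convex_position[OF \<open>subspace L\<close>, of "Suc m" _ 0 1 2])
    have "e 0 \<in> Basis" "e 1 \<in> Basis" "e 0 \<noteq> e 1"
      using e \<open>2 \<le> m\<close> inj_on_eq_iff[OF e(1), of 0 1] by auto
    then have "p (Suc m) \<bullet> e 0 = 1/3" by (simp add: p_def simplex_centroid_points_def inner_add_left inner_Basis)
    then have "p (Suc m) \<in> A" "p (Suc m) \<noteq> 0" using pA by auto
    then show "p (Suc m) - p 0 \<notin> L" using AL by (auto simp: p_def simplex_centroid_points_def)
  qed (use \<open>2 \<le> m\<close> in \<open>auto simp: p_def simplex_centroid_points_def algebra_simps\<close>)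
  ultimately show ?thesis by blast
qed

section \<open>Generic hyperplanes\<close>

lemma exists_inner_eq_if_independent:
  fixes v :: "'i \<Rightarrow> 'a::euclidean_space"
  assumes "independent (v ` J)" "inj_on v J"
  shows "\<exists>x. \<forall>i\<in>J. v i \<bullet> x = c i"
proof -
  obtain \<phi> :: "'a \<Rightarrow> real" where "linear \<phi>" and \<phi>: "\<forall>y\<in>v ` J. \<phi> y = c (the_inv_into J v y)"
    using linear_independent_extend[OF assms(1), of "\<lambda>y. c (the_inv_into J v y)"] by auto
  have "v i \<bullet> adjoint \<phi> 1 = c i" if "i \<in> J" for i
    using adjoint_works[OF \<open>linear \<phi>\<close>, of "v i" 1] \<phi> that assms(2) by (simp add: the_inv_into_f_f)
  then show ?thesis by blast
qed

lemma span_eq_UNIV_if_card_DIM: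
  fixes W :: "'i \<Rightarrow> 'a::euclidean_space"
  assumes "finite I" "card I = DIM('a)" "inj_on W I" "independent (W ` I)"
  shows "span (W ` I) = UNIV"
  using assms card_ge_dim_independent[of "W ` I" UNIV] by (auto simp: card_image)

definition generic_hyperplanes :: "nat \<Rightarrow> (nat \<Rightarrow> 'a::euclidean_space) \<Rightarrow> (nat \<Rightarrow> real) \<Rightarrow> bool" where
  "generic_hyperplanes n W C \<longleftrightarrow>
     (\<forall>I\<subseteq>{..<n}. card I \<le> DIM('a) \<longrightarrow> inj_on W I \<and> independent (W ` I)) \<and>
     (\<forall>I\<subseteq>{..<n}. card I = Suc DIM('a) \<longrightarrow> \<not> (\<exists>x. \<forall>i\<in>I. W i \<bullet> x = C i))"

lemma generic_hyperplanes_independent: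
  assumes "generic_hyperplanes n W C" "I \<subseteq> {..<n}" "card I \<le> DIM('a::euclidean_space)"
  shows "inj_on W I" "independent (W ` I :: 'a set)"
  using assms by (auto simp: generic_hyperplanes_def)

lemma generic_hyperplanes_normal_nonzero:
  assumes "generic_hyperplanes n (W :: nat \<Rightarrow> 'a::euclidean_space) C" "i < n"
  shows "W i \<noteq> 0"
  using generic_hyperplanes_independent(2)[OF assms(1), of "{i}"] assms(2)
  by (auto simp: DIM_positive Suc_le_eq)

lemma generic_hyperplanes_no_common_point:
  assumes "generic_hyperplanes n (W :: nat \<Rightarrow> 'a::euclidean_space) C" "I \<subseteq> {..<n}" "DIM('a) < card I"
  shows "\<not> (\<forall>i\<in>I. W i \<bullet> x = C i)"
proof
  assume x: "\<forall>i\<in>I. W i \<bullet> x = C i"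
  obtain I' where "I' \<subseteq> I" "card I' = Suc DIM('a)"
    using assms(3) by (metis Suc_leI obtain_subset_with_card_n)
  then show False
    using x assms(1,2) unfolding generic_hyperplanes_def by blast
qed

lemma generic_hyperplanes_unique_point:
  assumes "generic_hyperplanes n (W :: nat \<Rightarrow> 'a::euclidean_space) C" "I \<subseteq> {..<n}" "card I = DIM('a)"
  shows "\<exists>!x. \<forall>i\<in>I. W i \<bullet> x = C i"
proof -
  have inj: "inj_on W I" and ind: "independent (W ` I)"
    using generic_hyperplanes_independent[OF assms(1,2)] assms(3) by auto
  have span: "span (W ` I) = UNIV"
    using span_eq_UNIV_if_card_DIM[OF _ assms(3) inj ind] assms(2) finite_subset by blast
  have "x = y" if x: "\<forall>i\<in>I. W i \<bullet> x = C i" and y: "\<forall>i\<in>I. W i \<bullet> y = C i" for x y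
  proof -
    have "orthogonal (x - y) w" if "w \<in> span (W ` I)" for w
      using that by (rule orthogonal_to_span)
        (use x y in \<open>auto simp: orthogonal_def inner_diff_left inner_commute[of x] inner_commute[of y]\<close>)
    then have "orthogonal (x - y) (x - y)" using span by blast
    then show ?thesis by (simp add: orthogonal_def)
  qed
  then show ?thesis
    using exists_inner_eq_if_independent[OF ind inj] by blast
qed

lemma generic_hyperplanes_general_position:
  fixes W :: "nat \<Rightarrow> 'a::euclidean_space"
  assumes gen: "generic_hyperplanes n W C" and "DIM('a) \<le> n"
  shows "general_position (DIM('a) - 1) n (\<lambda>i. {x. W i \<bullet> x = C i})"
proof -
  define q where "q I = (THE x. \<forall>i\<in>I. W i \<bullet> x = C i)" for I
  have point: "(\<Inter>i\<in>I. {x. W i \<bullet> x = C i}) = {q I}"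
    if "I \<subseteq> {..<n}" "card I = DIM('a)" for I
    using theI'[OF generic_hyperplanes_unique_point[OF gen that]]
      generic_hyperplanes_unique_point[OF gen that] by (auto simp: q_def)
  have "inj_on q {I. I \<subseteq> {..<n} \<and> card I = DIM('a)}"
  proof (rule inj_onI, rule ccontr)
    fix I I' assume I: "I \<in> {I. I \<subseteq> {..<n} \<and> card I = DIM('a)}"
      and I': "I' \<in> {I. I \<subseteq> {..<n} \<and> card I = DIM('a)}" and "q I = q I'" and "I \<noteq> I'"
    have "finite I" using I finite_subset by auto
    then have "\<not> I' \<subseteq> I"
      using I I' \<open>I \<noteq> I'\<close> card_subset_eq[of I I'] by auto
    then have "I \<subset> I \<union> I'" by blast
    moreover have "finite (I \<union> I')" using I I' finite_subset[of "I \<union> I'" "{..<n}"] by auto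
    ultimately have "card I < card (I \<union> I')" by (intro psubset_card_mono)
    then have "DIM('a) < card (I \<union> I')" using I by simp
    moreover have "\<forall>i\<in>I \<union> I'. W i \<bullet> q I = C i"
      using point[of I] point[of I'] I I' \<open>q I = q I'\<close> by auto
    ultimately show False
      using generic_hyperplanes_no_common_point[OF gen, of "I \<union> I'" "q I"] I I' by blast
  qed
  then show ?thesis
    unfolding general_position_def using assms(2) point by (auto simp: DIM_positive)
qed

lemma generic_hyperplanes_inj:
  fixes W :: "nat \<Rightarrow> 'a::euclidean_space"
  assumes gen: "generic_hyperplanes n W C" and "DIM('a) < n"
  shows "inj_on (\<lambda>i. {x. W i \<bullet> x = C i}) {..<n}"
proof (rule inj_onI, rule ccontr)
  fix i j assume i: "i \<in> {..<n}" and j: "j \<in> {..<n}" and eq: "{x. W i \<bullet> x = C i} = {x. W j \<bullet> x = C j}"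
    and "i \<noteq> j"
  have "DIM('a) - 1 \<le> card ({..<n} - {i, j})" using i j assms(2) \<open>i \<noteq> j\<close> by (simp add: card_Diff_subset)
  then obtain T where T: "T \<subseteq> {..<n} - {i, j}" "card T = DIM('a) - 1"
    by (rule obtain_subset_with_card_n)
  have "finite T" "i \<notin> T" using T(1) finite_subset by auto
  then have I: "insert i T \<subseteq> {..<n}" "card (insert i T) = DIM('a)"
    using T i by (auto simp: DIM_positive)
  then obtain x where x: "\<forall>l\<in>insert i T. W l \<bullet> x = C l"
    using generic_hyperplanes_unique_point[OF gen] by blast
  then have "W j \<bullet> x = C j" using eq by blast
  moreover have "j \<notin> insert i T" using T(1) \<open>i \<noteq> j\<close> by auto
  then have "DIM('a) < card (insert j (insert i T))"
    using I(2) \<open>finite T\<close> by simp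
  ultimately show False
    using generic_hyperplanes_no_common_point[OF gen, of "insert j (insert i T)"] x I j by auto
qed

lemma negligible_hyperplanes_through_unique_point:
  fixes P :: "'a::euclidean_space \<Rightarrow> bool"
  assumes "\<exists>!x. P x" "c \<noteq> 0"
  shows "negligible {v. \<exists>x. P x \<and> v \<bullet> x = c}"
proof -
  obtain x0 where x0: "\<And>x. P x \<Longrightarrow> x = x0" using assms(1) by blast
  have "{v. \<exists>x. P x \<and> v \<bullet> x = c} \<subseteq> {v. x0 \<bullet> v = c}"
  proof
    fix v assume "v \<in> {v. \<exists>x. P x \<and> v \<bullet> x = c}"
    then obtain x where "P x" "v \<bullet> x = c" by blast
    then show "v \<in> {v. x0 \<bullet> v = c}" using x0 by (simp add: inner_commute)
  qed
  moreover have "negligible {v. x0 \<bullet> v = c}" using assms(2) by (intro negligible_hyperplane) simp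
  ultimately show ?thesis by (rule negligible_subset[rotated])
qed

lemma generic_hyperplanes_cong:
  assumes "generic_hyperplanes n W C" "\<And>i. i < n \<Longrightarrow> W' i = W i"
  shows "generic_hyperplanes n W' C"
proof -
  have "W' ` I = W ` I" "inj_on W' I = inj_on W I" "(\<forall>i\<in>I. W' i \<bullet> x = C i) = (\<forall>i\<in>I. W i \<bullet> x = C i)"
    if "I \<subseteq> {..<n}" for I x
  proof -
    have agree: "W' i = W i" if "i \<in> I" for i using that \<open>I \<subseteq> {..<n}\<close> assms(2) by auto
    show "W' ` I = W ` I" by (rule image_cong) (simp_all add: agree)
    show "inj_on W' I = inj_on W I" by (rule inj_on_cong) (simp add: agree)
    show "(\<forall>i\<in>I. W' i \<bullet> x = C i) = (\<forall>i\<in>I. W i \<bullet> x = C i)" by (simp add: agree)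
  qed
  then show ?thesis using assms(1) unfolding generic_hyperplanes_def by simp
qed

lemma generic_hyperplanes_Suc:
  fixes W :: "nat \<Rightarrow> 'a::euclidean_space"
  assumes gen: "generic_hyperplanes m W C"
    and span: "\<And>J. J \<subseteq> {..<m} \<Longrightarrow> card J < DIM('a) \<Longrightarrow> W m \<notin> span (W ` J)"
    and point: "\<And>J x. J \<subseteq> {..<m} \<Longrightarrow> card J = DIM('a) \<Longrightarrow> \<forall>i\<in>J. W i \<bullet> x = C i \<Longrightarrow> W m \<bullet> x \<noteq> C m"
  shows "generic_hyperplanes (Suc m) W C"
proof -
  have split: "I - {m} \<subseteq> {..<m}" "card I = Suc (card (I - {m}))"
    if "I \<subseteq> {..<Suc m}" "m \<in> I" for I
    using that card_Suc_Diff1[OF finite_subset[OF that(1)] that(2)] by auto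
  have old: "I \<subseteq> {..<m}" if "I \<subseteq> {..<Suc m}" "m \<notin> I" for I
    using that by (auto simp: less_Suc_eq)
  have "inj_on W I \<and> independent (W ` I)" if I: "I \<subseteq> {..<Suc m}" "card I \<le> DIM('a)" for I
  proof (cases "m \<in> I")
    case True
    note J = split[OF I(1) True]
    then have notin: "W m \<notin> span (W ` (I - {m}))" using span I(2) by simp
    have "inj_on W (I - {m})" and "independent (W ` (I - {m}))"
      using generic_hyperplanes_independent[OF gen J(1)] J(2) I(2) by auto
    moreover have "W m \<notin> W ` (I - {m})" using notin by (meson span_base)
    moreover have "independent (insert (W m) (W ` (I - {m})))"
      using notin \<open>independent (W ` (I - {m}))\<close> by (rule independent_insertI)
    moreover have "W ` I = insert (W m) (W ` (I - {m}))" using True by blast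
    ultimately show ?thesis unfolding inj_on_def by (metis DiffI singletonD image_eqI)
  qed (use old[OF I(1)] generic_hyperplanes_independent[OF gen] I(2) in auto)
  moreover have "\<not> (\<exists>x. \<forall>i\<in>I. W i \<bullet> x = C i)" if I: "I \<subseteq> {..<Suc m}" "card I = Suc DIM('a)" for I
  proof (cases "m \<in> I")
    case True
    note J = split[OF I(1) True]
    show ?thesis
    proof
      assume "\<exists>x. \<forall>i\<in>I. W i \<bullet> x = C i"
      then obtain x where x: "\<forall>i\<in>I. W i \<bullet> x = C i" by blast
      have "card (I - {m}) = DIM('a)" using J(2) I(2) by simp
      then have "W m \<bullet> x \<noteq> C m" using point[OF J(1)] x by blast
      then show False using x True by blast
    qed
  qed (use old[OF I(1)] gen I(2) in \<open>auto simp: generic_hyperplanes_def\<close>)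
  ultimately show ?thesis unfolding generic_hyperplanes_def by blast
qed

lemma generic_hyperplanes_extend:
  fixes W :: "nat \<Rightarrow> 'a::euclidean_space"
  assumes gen: "generic_hyperplanes m W C" and "C m \<noteq> 0" and "\<not> negligible S"
  shows "\<exists>v\<in>S. generic_hyperplanes (Suc m) (W(m := v)) C"
proof -
  define small where "small = {J. J \<subseteq> {..<m} \<and> card J < DIM('a)}"
  define full where "full = {J. J \<subseteq> {..<m} \<and> card J = DIM('a)}"
  define through where "through J = {v. \<exists>x. (\<forall>i\<in>J. W i \<bullet> x = C i) \<and> v \<bullet> x = C m}" for J
  have "finite small" "finite full"
    unfolding small_def full_def by (auto intro: finite_subset[of _ "Pow {..<m}"])
  have "negligible (span (W ` J))" if "J \<in> small" for J
  proof (rule negligible_lowdim)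
    have "finite J" using that finite_subset by (auto simp: small_def)
    then have "dim (span (W ` J)) \<le> card (W ` J)"
      by (intro dim_le_card) auto
    also have "\<dots> \<le> card J" using \<open>finite J\<close> by (rule card_image_le)
    finally
    show "dim (span (W ` J)) < DIM('a)" using that by (simp add: small_def)
  qed
  moreover have "negligible (through J)" if "J \<in> full" for J
    unfolding through_def using that assms(2)
    by (intro negligible_hyperplanes_through_unique_point generic_hyperplanes_unique_point[OF gen])
      (auto simp: full_def)
  ultimately have "negligible ((\<Union>J\<in>small. span (W ` J)) \<union> (\<Union>J\<in>full. through J))"
    using \<open>finite small\<close> \<open>finite full\<close> by (intro negligible_Un negligible_Union) auto
  then obtain v where "v \<in> S" and v: "v \<notin> (\<Union>J\<in>small. span (W ` J)) \<union> (\<Union>J\<in>full. through J)"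
    using assms(3) negligible_subset by blast
  have agree: "(W(m := v)) ` J = W ` J" "\<forall>i\<in>J. (W(m := v)) i = W i" if "J \<subseteq> {..<m}" for J
    using that by auto
  have "generic_hyperplanes (Suc m) (W(m := v)) C"
  proof (rule generic_hyperplanes_Suc[OF generic_hyperplanes_cong[OF gen]])
    show "(W(m := v)) m \<notin> span ((W(m := v)) ` J)" if "J \<subseteq> {..<m}" "card J < DIM('a)" for J
      using v that agree[OF that(1)] by (auto simp: small_def)
    show "(W(m := v)) m \<bullet> x \<noteq> C m"
      if "J \<subseteq> {..<m}" "card J = DIM('a)" "\<forall>i\<in>J. (W(m := v)) i \<bullet> x = C i" for J x
    proof -
      have "\<forall>i\<in>J. W i \<bullet> x = C i" using that(3) agree[OF that(1)] by simp
      then have "v \<bullet> x \<noteq> C m" using v that(1,2) unfolding full_def through_def by blast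
      then show ?thesis by simp
    qed
  qed simp
  then show ?thesis using \<open>v \<in> S\<close> by blast
qed

lemma generic_hyperplanes_extend_many:
  fixes W :: "nat \<Rightarrow> 'a::euclidean_space"
  assumes "generic_hyperplanes m W C" "\<And>i. m \<le> i \<Longrightarrow> C i \<noteq> 0" "\<And>i. \<not> negligible (S i)"
  shows "\<exists>W'. generic_hyperplanes (m + t) W' C \<and> (\<forall>i<m. W' i = W i) \<and> (\<forall>i\<in>{m..<m + t}. W' i \<in> S i)"
proof (induction t)
  case 0
  show ?case using assms(1) by auto
next
  case (Suc t)
  then obtain W' where W': "generic_hyperplanes (m + t) W' C" "\<forall>i<m. W' i = W i"
      "\<forall>i\<in>{m..<m + t}. W' i \<in> S i" by blast
  obtain v where "v \<in> S (m + t)" "generic_hyperplanes (Suc (m + t)) (W'(m + t := v)) C"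
    using generic_hyperplanes_extend[OF W'(1) assms(2) assms(3)] by auto
  moreover have "\<forall>i<m. (W'(m + t := v)) i = W i" "\<forall>i\<in>{m..<m + Suc t}. (W'(m + t := v)) i \<in> S i"
    using W'(2,3) \<open>v \<in> S (m + t)\<close> by (auto simp: less_Suc_eq)
  ultimately show ?case by (metis add_Suc_right)
qed

lemma nonnegligible_positive_combinations:
  fixes W :: "'i \<Rightarrow> 'a::euclidean_space"
  assumes "finite J" "card J = DIM('a)" "inj_on W J" "independent (W ` J)"
  shows "\<not> negligible {\<Sum>j\<in>J. \<mu> j *\<^sub>R W j | \<mu>. \<forall>j\<in>J. 1 / DIM('a) < \<mu> j}"
proof -
  obtain \<beta> where \<beta>: "bij_betw \<beta> J (Basis :: 'a set)"
    using finite_same_card_bij[OF assms(1), of "Basis :: 'a set"] assms(2) by auto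
  define g where "g v = (\<Sum>j\<in>J. (v \<bullet> \<beta> j) *\<^sub>R W j)" for v
  have "linear g"
    unfolding g_def by (intro linearI) (auto simp: inner_add_left scaleR_add_left sum.distrib scaleR_sum_right)
  have "g (\<beta> i) = W i" if "i \<in> J" for i
  proof -
    have "\<beta> i \<bullet> \<beta> j = (if i = j then 1 else 0)" if "j \<in> J" for j
    proof -
      have "\<beta> i \<in> Basis" "\<beta> j \<in> Basis" using \<beta> \<open>i \<in> J\<close> that by (auto simp: bij_betw_def)
      then show ?thesis using \<beta> \<open>i \<in> J\<close> that by (auto simp: bij_betw_def inj_on_def inner_Basis)
    qed
    then have "g (\<beta> i) = (\<Sum>j\<in>J. if i = j then W j else 0)"
      unfolding g_def by (intro sum.cong) auto
    then show ?thesis using assms(1) that by simp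
  qed
  then have "W ` J \<subseteq> range g" by (metis image_subset_iff rangeI)
  then have "span (W ` J) \<subseteq> range g"
    using \<open>linear g\<close> by (intro span_minimal) (auto intro: linear_subspace_image)
  then have "surj g" using span_eq_UNIV_if_card_DIM[OF assms] by auto
  define B where "B = box ((1 / DIM('a)) *\<^sub>R One) ((2 / DIM('a)) *\<^sub>R One :: 'a)"
  have "g ` B \<subseteq> {\<Sum>j\<in>J. \<mu> j *\<^sub>R W j | \<mu>. \<forall>j\<in>J. 1 / DIM('a) < \<mu> j}"
  proof
    fix w assume "w \<in> g ` B"
    then obtain v where "v \<in> B" "w = g v" by blast
    moreover have "1 / DIM('a) < v \<bullet> \<beta> j" if "j \<in> J" for j
      using \<open>v \<in> B\<close> \<beta> that by (auto simp: B_def mem_box bij_betw_def)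
    ultimately show "w \<in> {\<Sum>j\<in>J. \<mu> j *\<^sub>R W j | \<mu>. \<forall>j\<in>J. 1 / DIM('a) < \<mu> j}"
      unfolding g_def by (auto intro!: exI[of _ "\<lambda>j. v \<bullet> \<beta> j"])
  qed
  moreover have "\<not> negligible (g ` B)"
    using \<open>linear g\<close> \<open>surj g\<close>
    by (intro open_not_negligible open_surjective_linear_image) (auto simp: B_def box_ne_empty divide_strict_right_mono)
  ultimately show ?thesis using negligible_subset by blast
qed

section \<open>Clusters of hyperplanes\<close>

(* The radius 1 / (4 * DIM('a)) keeps |(W j - u) \<bullet> y| below M / 4 on the cube [-M, M]^d. *)
definition cluster_around :: "nat \<Rightarrow> (nat \<Rightarrow> 'a::euclidean_space) \<Rightarrow> (nat \<Rightarrow> real) \<Rightarrow> 'a \<Rightarrow> bool" where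
  "cluster_around n W C u \<longleftrightarrow>
     (\<exists>J c \<mu>. J \<subseteq> {..<n} \<and> c < n \<and> C c = 1 \<and>
        (\<forall>j\<in>J. C j = 1 \<and> norm (W j - u) \<le> 1 / (4 * DIM('a)) \<and> 0 \<le> \<mu> j) \<and>
        1 < sum \<mu> J \<and> W c = (\<Sum>j\<in>J. \<mu> j *\<^sub>R W j))"

lemma cluster_around_mono:
  assumes "cluster_around n W C u" "n \<le> n'" "\<And>i. i < n \<Longrightarrow> W' i = W i"
  shows "cluster_around n' W' C u"
proof -
  obtain J c \<mu> where J: "J \<subseteq> {..<n}" "c < n" "C c = 1"
      "\<forall>j\<in>J. C j = 1 \<and> norm (W j - u) \<le> 1 / (4 * DIM('a)) \<and> 0 \<le> \<mu> j"
      "1 < sum \<mu> J" "W c = (\<Sum>j\<in>J. \<mu> j *\<^sub>R W j)"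
    using assms(1) unfolding cluster_around_def by blast
  have "(\<Sum>j\<in>J. \<mu> j *\<^sub>R W' j) = (\<Sum>j\<in>J. \<mu> j *\<^sub>R W j)"
    using J(1) assms(3) by (intro sum.cong) auto
  then have "W' c = (\<Sum>j\<in>J. \<mu> j *\<^sub>R W' j)"
    using J(2,6) assms(3) by simp
  then show ?thesis
    unfolding cluster_around_def using J assms(2,3)
    by (intro exI[of _ J] exI[of _ c] exI[of _ \<mu>]) auto
qed

lemma generic_hyperplanes_add_cluster:
  fixes W :: "nat \<Rightarrow> 'a::euclidean_space"
  assumes gen: "generic_hyperplanes m W C" and C: "\<And>i. m \<le> i \<Longrightarrow> C i = 1"
  shows "\<exists>W'. generic_hyperplanes (m + Suc DIM('a)) W' C \<and> (\<forall>i<m. W' i = W i) \<and>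
           cluster_around (m + Suc DIM('a)) W' C u"
proof -
  define e :: real where "e = 1 / (4 * DIM('a))"
  define J where "J = {m..<m + DIM('a)}"
  define c where "c = m + DIM('a)"
  have "e > 0" by (simp add: e_def)
  then obtain V where genV: "generic_hyperplanes c V C" and V: "\<forall>i<m. V i = W i"
    and near: "\<forall>j\<in>J. V j \<in> ball u e"
    using generic_hyperplanes_extend_many[OF gen, of "\<lambda>_. ball u e" "DIM('a)"] C
    by (auto simp: J_def c_def open_not_negligible)
  have J: "J \<subseteq> {..<c}" "card J = DIM('a)" "finite J" by (auto simp: J_def c_def)
  have "inj_on V J" "independent (V ` J)"
    using generic_hyperplanes_independent[OF genV J(1)] J(2) by auto
  from generic_hyperplanes_extend[OF genV _ nonnegligible_positive_combinations[OF J(3,2) this]]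
  obtain \<mu> where \<mu>: "\<forall>j\<in>J. 1 / DIM('a) < \<mu> j"
    and gen': "generic_hyperplanes (Suc c) (V(c := \<Sum>j\<in>J. \<mu> j *\<^sub>R V j)) C"
    using C[of c] by (auto simp: c_def)
  define W' where "W' = V(c := \<Sum>j\<in>J. \<mu> j *\<^sub>R V j)"
  have "c \<notin> J" by (simp add: J_def c_def)
  then have W'J: "\<forall>j\<in>J. W' j = V j" by (auto simp: W'_def)
  have "(\<Sum>j\<in>J. 1 / DIM('a)) < sum \<mu> J"
    using \<mu> J(2) by (intro sum_strict_mono) (auto simp: J_def)
  then have "1 < sum \<mu> J" using J(2) by simp
  moreover have "W' c = (\<Sum>j\<in>J. \<mu> j *\<^sub>R W' j)" using W'J by (simp add: W'_def)
  moreover have "0 \<le> \<mu> j" if "j \<in> J" for j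
    using \<mu> that order.strict_trans[of 0 "1 / DIM('a)" "\<mu> j"] by auto
  moreover have "\<forall>j\<in>J. C j = 1 \<and> norm (W' j - u) \<le> 1 / (4 * DIM('a))"
    using near W'J C by (auto simp: J_def e_def dist_norm norm_minus_commute)
  ultimately have "cluster_around (Suc c) W' C u"
    unfolding cluster_around_def using J(1) C[of c]
    by (intro exI[of _ J] exI[of _ c] exI[of _ \<mu>]) (auto simp: c_def)
  moreover have "\<forall>i<m. W' i = W i" using V by (simp add: W'_def c_def)
  ultimately show ?thesis using gen' by (auto simp: W'_def c_def)
qed

lemma generic_hyperplanes_with_clusters:
  fixes b :: "'a::euclidean_space"
  assumes "finite U" "b \<noteq> 0" "\<And>i. 0 < i \<Longrightarrow> C i = 1"
  shows "\<exists>W. generic_hyperplanes (1 + card U * Suc DIM('a)) W C \<and> W 0 = b \<and>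
           (\<forall>u\<in>U. cluster_around (1 + card U * Suc DIM('a)) W C u)"
  using assms(1)
proof (induction U rule: finite_induct)
  case empty
  have "generic_hyperplanes 1 (\<lambda>_. b) C"
    unfolding generic_hyperplanes_def
  proof (rule conjI; intro allI impI)
    fix I :: "nat set" assume "I \<subseteq> {..<1}"
    then have "I \<subseteq> {0}" by auto
    then show "inj_on (\<lambda>_. b) I \<and> independent ((\<lambda>_. b) ` I)"
      using assms(2) by (auto simp: inj_on_def subset_singleton_iff independent_empty)
  next
    fix I :: "nat set" assume "I \<subseteq> {..<1}" "card I = Suc DIM('a)"
    then show "\<not> (\<exists>x. \<forall>i\<in>I. b \<bullet> x = C i)"
      using card_mono[of "{0}" I] by auto
  qed
  then show ?case by auto
next
  case (insert u U)
  then obtain W where W: "generic_hyperplanes (1 + card U * Suc DIM('a)) W C" "W 0 = b"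
    "\<forall>u\<in>U. cluster_around (1 + card U * Suc DIM('a)) W C u" by blast
  have "C i = 1" if "1 + card U * Suc DIM('a) \<le> i" for i
    using that assms(3) by simp
  then obtain W' where W': "generic_hyperplanes (1 + card U * Suc DIM('a) + Suc DIM('a)) W' C"
    "\<forall>i<1 + card U * Suc DIM('a). W' i = W i"
    "cluster_around (1 + card U * Suc DIM('a) + Suc DIM('a)) W' C u"
    using generic_hyperplanes_add_cluster[OF W(1)] by blast
  have "\<forall>u\<in>U. cluster_around (1 + card U * Suc DIM('a) + Suc DIM('a)) W' C u"
    using W(3) W'(2) by (auto intro: cluster_around_mono)
  then show ?case
    using W' W(2) insert by (auto simp: algebra_simps)
qed

definition supporting_hyperplanes :: "nat \<Rightarrow> (nat \<Rightarrow> 'a::euclidean_space) \<Rightarrow> (nat \<Rightarrow> real) \<Rightarrow> 'a set \<Rightarrow> bool" where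
  "supporting_hyperplanes n W C P \<longleftrightarrow>
     (\<forall>i<n. ({x. W i \<bullet> x = C i} \<inter> P) face_of P \<and> {x. W i \<bullet> x = C i} \<inter> P \<noteq> {})"

lemma norm_le_DIM_mult_coordinate_bound:
  fixes y :: "'a::euclidean_space" and M :: real
  assumes "\<And>b. b \<in> Basis \<Longrightarrow> \<bar>y \<bullet> b\<bar> \<le> M"
  shows "norm y \<le> DIM('a) * M"
proof -
  have "norm y \<le> (\<Sum>b\<in>Basis. \<bar>y \<bullet> b\<bar>)" by (rule norm_le_l1)
  also have "\<dots> \<le> (\<Sum>b\<in>(Basis::'a set). M)" by (rule sum_mono) (rule assms)
  finally show ?thesis by simp
qed

lemma abs_inner_le_quarter:
  fixes v y :: "'a::euclidean_space" and M :: real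
  assumes "norm v \<le> 1 / (4 * DIM('a))" "\<And>b. b \<in> Basis \<Longrightarrow> \<bar>y \<bullet> b\<bar> \<le> M"
  shows "\<bar>v \<bullet> y\<bar> \<le> M / 4"
proof -
  have "0 \<le> M" using assms(2)[OF SOME_Basis] by linarith
  have "\<bar>v \<bullet> y\<bar> \<le> norm v * norm y" by (rule Cauchy_Schwarz_ineq2)
  also have "\<dots> \<le> (1 / (4 * DIM('a))) * (DIM('a) * M)"
    using assms \<open>0 \<le> M\<close> by (intro mult_mono norm_le_DIM_mult_coordinate_bound) auto
  also have "\<dots> = M / 4" by simp
  finally show ?thesis .
qed

lemma supporting_hyperplanes_cluster_bound:
  fixes W :: "nat \<Rightarrow> 'a::euclidean_space"
  assumes "convex P" and supp: "supporting_hyperplanes n W C P" and "cluster_around n W C u"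
    and "y \<in> P" and M: "\<And>b. b \<in> Basis \<Longrightarrow> \<bar>y \<bullet> b\<bar> \<le> M"
  shows "u \<bullet> y \<le> 1 + M / 4"
proof (rule ccontr)
  assume far: "\<not> u \<bullet> y \<le> 1 + M / 4"
  obtain J c \<mu> where J: "J \<subseteq> {..<n}" "c < n" "C c = 1"
      "\<forall>j\<in>J. C j = 1 \<and> norm (W j - u) \<le> 1 / (4 * DIM('a)) \<and> 0 \<le> \<mu> j"
      and "1 < sum \<mu> J" "W c = (\<Sum>j\<in>J. \<mu> j *\<^sub>R W j)"
    using assms(3) unfolding cluster_around_def by blast
  have beyond: "\<forall>x\<in>P. 1 \<le> W j \<bullet> x" if "j \<in> J" for j
  proof -
    have "\<bar>(W j - u) \<bullet> y\<bar> \<le> M / 4"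
      using J(4) that M by (intro abs_inner_le_quarter) auto
    then have "1 < W j \<bullet> y" using far unfolding inner_diff_left abs_le_iff by linarith
    moreover have "({x. W j \<bullet> x = 1} \<inter> P) face_of P"
      using supp J(1,4) that unfolding supporting_hyperplanes_def by auto
    ultimately show ?thesis
      using face_of_hyperplane_one_side[OF \<open>convex P\<close>] \<open>y \<in> P\<close> by fastforce
  qed
  have "{x. W c \<bullet> x = C c} \<inter> P \<noteq> {}"
    using supp J(2) unfolding supporting_hyperplanes_def by auto
  then obtain z where z: "z \<in> P" "W c \<bullet> z = 1" using J(3) by auto
  have "\<mu> j \<le> \<mu> j * (W j \<bullet> z)" if "j \<in> J" for j
    using mult_left_mono[of 1 "W j \<bullet> z" "\<mu> j"] beyond[OF that] z(1) J(4) that by simp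
  then have "sum \<mu> J \<le> (\<Sum>j\<in>J. \<mu> j * (W j \<bullet> z))" by (rule sum_mono)
  also have "\<dots> = W c \<bullet> z" by (simp add: \<open>W c = _\<close> inner_sum_left)
  finally show False using z(2) \<open>1 < sum \<mu> J\<close> by simp
qed

lemma supporting_hyperplanes_coordinates_bounded:
  fixes W :: "nat \<Rightarrow> 'a::euclidean_space"
  assumes "convex P" "supporting_hyperplanes n W C P"
    and clusters: "\<And>b. b \<in> Basis \<Longrightarrow> cluster_around n W C b \<and> cluster_around n W C (- b)"
    and "y \<in> P" "b \<in> Basis"
  shows "\<bar>y \<bullet> b\<bar> \<le> 4 / 3"
proof -
  define M where "M = Max ((\<lambda>b. \<bar>y \<bullet> b\<bar>) ` Basis)"
  have M: "\<bar>y \<bullet> b'\<bar> \<le> M" if "b' \<in> Basis" for b'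
    unfolding M_def using that by (intro Max_ge) auto
  have "M \<in> (\<lambda>b. \<bar>y \<bullet> b\<bar>) ` Basis" unfolding M_def by (rule Max_in) auto
  then obtain b0 where b0: "b0 \<in> Basis" "\<bar>y \<bullet> b0\<bar> = M" by auto
  have "M \<le> 1 + M / 4"
  proof (cases "0 \<le> y \<bullet> b0")
    case True
    then have "M = b0 \<bullet> y" using b0(2) by (simp add: inner_commute)
    then show ?thesis
      using supporting_hyperplanes_cluster_bound[OF assms(1,2) conjunct1[OF clusters[OF b0(1)]] \<open>y \<in> P\<close> M]
      by simp
  next
    case False
    then have "M = (- b0) \<bullet> y" using b0(2) by (simp add: inner_commute)
    then show ?thesis
      using supporting_hyperplanes_cluster_bound[OF assms(1,2) conjunct2[OF clusters[OF b0(1)]] \<open>y \<in> P\<close> M]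
      by simp
  qed
  then show ?thesis using M[OF \<open>b \<in> Basis\<close>] by linarith
qed

lemma not_supporting_hyperplanes_with_clusters:
  fixes W :: "nat \<Rightarrow> 'a::euclidean_space"
  assumes "convex P" and supp: "supporting_hyperplanes n W C P"
    and "0 < n" "W 0 \<in> Basis" "C 0 = 0"
    and clusters: "\<And>b. b \<in> Basis \<Longrightarrow> cluster_around n W C b \<and> cluster_around n W C (- b)"
  shows False
proof -
  have "({x. W 0 \<bullet> x = 0} \<inter> P) face_of P"
    using supp \<open>0 < n\<close> \<open>C 0 = 0\<close> unfolding supporting_hyperplanes_def by auto
  then have "(\<forall>x\<in>P. W 0 \<bullet> x \<le> 0) \<or> (\<forall>x\<in>P. 0 \<le> W 0 \<bullet> x)"
    using face_of_hyperplane_one_side[OF \<open>convex P\<close>] by blast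
  then have "\<exists>u\<in>{W 0, - W 0}. \<forall>x\<in>P. u \<bullet> x \<le> 0" by auto
  then obtain u where "u \<in> {W 0, - W 0}" and side: "\<forall>x\<in>P. u \<bullet> x \<le> 0" by blast
  then have "cluster_around n W C u" using clusters \<open>W 0 \<in> Basis\<close> by auto
  then obtain J c \<mu> where J: "J \<subseteq> {..<n}"
      "\<forall>j\<in>J. C j = 1 \<and> norm (W j - u) \<le> 1 / (4 * DIM('a)) \<and> 0 \<le> \<mu> j" "1 < sum \<mu> J"
      "c < n" "C c = 1" "W c = (\<Sum>j\<in>J. \<mu> j *\<^sub>R W j)"
    unfolding cluster_around_def by blast
  have "J \<noteq> {}" using J(3) by auto
  then obtain j where "j \<in> J" by blast
  then have "{x. W j \<bullet> x = C j} \<inter> P \<noteq> {}"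
    using supp J(1) unfolding supporting_hyperplanes_def by auto
  then obtain z where z: "z \<in> P" "W j \<bullet> z = 1" using J(2) \<open>j \<in> J\<close> by auto
  have "\<bar>(W j - u) \<bullet> z\<bar> \<le> (4 / 3) / 4"
    using J(2) \<open>j \<in> J\<close> supporting_hyperplanes_coordinates_bounded[OF assms(1,2) clusters z(1)]
    by (intro abs_inner_le_quarter) auto
  moreover have "u \<bullet> z \<le> 0" using side z(1) by blast
  ultimately show False using z(2) by (simp add: inner_diff_left)
qed

lemma hyperplanes_not_in_convex_position:
  "\<exists>n (U :: nat \<Rightarrow> 'a::euclidean_space set). (\<forall>i<n. k_flat (DIM('a) - 1) (U i)) \<and>
     inj_on U {..<n} \<and> general_position (DIM('a) - 1) n U \<and> \<not> convex_position (DIM('a) - 1) n U"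
proof -
  define C :: "nat \<Rightarrow> real" where "C i = (if i = 0 then 0 else 1)" for i
  define b :: 'a where "b = (SOME b. b \<in> Basis)"
  define n where "n = 1 + card (Basis \<union> uminus ` Basis :: 'a set) * Suc DIM('a)"
  have b: "b \<in> Basis" unfolding b_def by (rule SOME_Basis)
  then obtain W where gen: "generic_hyperplanes n W C" and "W 0 = b"
    and clusters: "\<forall>u\<in>Basis \<union> uminus ` Basis. cluster_around n W C u"
    using generic_hyperplanes_with_clusters[of "Basis \<union> uminus ` Basis" b C]
    by (auto simp: C_def n_def nonzero_Basis)
  have "0 < card (Basis \<union> uminus ` Basis :: 'a set)" using b by (auto simp: card_gt_0_iff)
  then have "DIM('a) \<le> card (Basis \<union> uminus ` Basis :: 'a set) * DIM('a)" by simp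
  then have "DIM('a) < n" unfolding n_def mult_Suc_right by linarith
  define U where "U = (\<lambda>i. {x. W i \<bullet> x = C i})"
  have "\<not> convex_position (DIM('a) - 1) n U"
  proof
    assume "convex_position (DIM('a) - 1) n U"
    then obtain P where "polytope P" "supporting_hyperplanes n W C P"
      by (rule convex_position_nonempty_faces) (auto simp: supporting_hyperplanes_def U_def)
    then show False
      by (rule not_supporting_hyperplanes_with_clusters[OF polytope_imp_convex])
        (use clusters \<open>DIM('a) < n\<close> \<open>W 0 = b\<close> b in \<open>auto simp: C_def\<close>)
  qed
  moreover have "k_flat (DIM('a) - 1) (U i)" if "i < n" for i
    unfolding U_def using generic_hyperplanes_normal_nonzero[OF gen that] by (rule k_flat_hyperplane)
  moreover have "inj_on U {..<n}" "general_position (DIM('a) - 1) n U"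
    unfolding U_def using generic_hyperplanes_general_position[OF gen] generic_hyperplanes_inj[OF gen]
      \<open>DIM('a) < n\<close> by auto
  ultimately show ?thesis by blast
qed

theorem theorem1p2:
  fixes k :: nat
  assumes "DIM('a::euclidean_space) \<ge> 2" and "k \<le> DIM('a) - 1"
  shows "\<exists>n (U :: nat \<Rightarrow> 'a set).
           (\<forall>i<n. k_flat k (U i)) \<and> inj_on U {..<n} \<and>
           general_position k n U \<and> \<not> convex_position k n U"
proof (cases "k + 2 \<le> DIM('a)")
  case True
  then show ?thesis by (rule translates_not_in_convex_position)
next
  case False
  then have "k = DIM('a) - 1" using assms(2) by simp
  then show ?thesis using hyperplanes_not_in_convex_position by blast
qed

end
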